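(* For every fixed integer $r\ge1$, the ordinary generating function $T_r(z)=\sum_{c\ge0}T(r,c)z^c$ is a rational function of $z$.
   Context: A tatami tiling of the $r\times c$ rectangular grid is a tiling by monomers ($1\times1$ tiles) and dimers ($1\times2$ or $2\times1$ tiles) such that no point is a corner of four distinct tiles. $T(r,c)$ denotes the total number of tatami tilings of the $r\times c$ grid (with any number of monomers), with $T(r,0)=1$. *)

theory Defs
  imports "HOL-Computational_Algebra.Computational_Algebra"
begin

definition grid :: "nat \<Rightarrow> nat \<Rightarrow> (nat \<times> nat) set" where
  "grid r c = {0..<r} \<times> {0..<c}"

definition is_tile :: "(nat \<times> nat) set \<Rightarrow> bool" where
  "is_tile t \<longleftrightarrow> (\<exists>i j. t = {(i, j)}) \<or> (\<exists>i j. t = {(i, j), (i, Suc j)})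
                  \<or> (\<exists>i j. t = {(i, j), (Suc i, j)})"

definition tiling :: "nat \<Rightarrow> nat \<Rightarrow> (nat \<times> nat) set set \<Rightarrow> bool" where
  "tiling r c S \<longleftrightarrow> (\<forall>t\<in>S. is_tile t) \<and> \<Union>S = grid r c
     \<and> (\<forall>t\<in>S. \<forall>t'\<in>S. t \<noteq> t' \<longrightarrow> t \<inter> t' = {})"

text \<open>Tatami condition: no lattice point (i,j) is a corner of four distinct tiles, i.e.
  the four cells around it, (i-1,j-1),(i-1,j),(i,j-1),(i,j), never lie in four
  pairwise distinct tiles.  (Only points with i,j > 0 have four surrounding cells.)\<close>
definition tatami :: "nat \<Rightarrow> nat \<Rightarrow> (nat \<times> nat) set set \<Rightarrow> bool" where
  "tatami r c S \<longleftrightarrow> tiling r c S \<and>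
     (\<forall>i j. 0 < i \<and> 0 < j \<longrightarrow>
        \<not> (\<exists>t1\<in>S. \<exists>t2\<in>S. \<exists>t3\<in>S. \<exists>t4\<in>S.
              (i - 1, j - 1) \<in> t1 \<and> (i - 1, j) \<in> t2 \<and> (i, j - 1) \<in> t3 \<and> (i, j) \<in> t4 \<and>
              t1 \<noteq> t2 \<and> t1 \<noteq> t3 \<and> t1 \<noteq> t4 \<and> t2 \<noteq> t3 \<and> t2 \<noteq> t4 \<and> t3 \<noteq> t4))"

definition T :: "nat \<Rightarrow> nat \<Rightarrow> nat" where
  "T r c = card {S. tatami r c S}"

end

theory Submission
  imports Defs
begin

text \<open>Transfer-matrix method.  Cut a tatami tiling of the r x c grid into its c columns and record,
  for each column, the rows where a horizontal dimer starts and the rows where a vertical dimer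
  lies.  The tiling is determined by this word of column states (the monomers fill the rest), and
  a word arises from a tatami tiling iff each state is consistent on its own and each pair of
  neighbouring states is compatible, the tatami condition being local to two adjacent columns.
  So T(r,c) counts walks of length c in a finite graph on column states; the generating
  functions of walks from each vertex satisfy a linear system with coefficients in X Q[X],
  which Gaussian elimination solves within rational power series.\<close>

text \<open>Asking for a denominator with nonzero constant term, rather than just a nonzero one,
  is what allows solving F = A + B F below.\<close>

definition rational_fps :: "rat fps \<Rightarrow> bool" where
  "rational_fps F \<longleftrightarrow> (\<exists>p q. poly.coeff q 0 \<noteq> 0 \<and> fps_of_poly q * F = fps_of_poly p)"

lemma rational_fps_of_poly: "rational_fps (fps_of_poly p)"
  unfolding rational_fps_def by (rule exI[of _ p], rule exI[of _ 1]) simp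

lemma rational_fps_const: "rational_fps (fps_const a)"
  using rational_fps_of_poly[of "[:a:]"] by (simp add: fps_of_poly_const)

lemma rational_fps_X: "rational_fps fps_X"
  using rational_fps_of_poly[of "[:0,1:]"] by simp

lemma rational_fps_0: "rational_fps 0" using rational_fps_const[of 0] by simp
lemma rational_fps_1: "rational_fps 1" using rational_fps_const[of 1] by simp

lemma rational_fps_add: assumes "rational_fps F" "rational_fps G" shows "rational_fps (F + G)"
proof -
  obtain p1 q1 where 1: "poly.coeff q1 0 \<noteq> 0" "fps_of_poly q1 * F = fps_of_poly p1"
    using assms(1) unfolding rational_fps_def by blast
  obtain p2 q2 where 2: "poly.coeff q2 0 \<noteq> 0" "fps_of_poly q2 * G = fps_of_poly p2"
    using assms(2) unfolding rational_fps_def by blast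
  have "fps_of_poly (q1*q2) * (F + G) = fps_of_poly q2 * (fps_of_poly q1 * F) + fps_of_poly q1 * (fps_of_poly q2 * G)"
    unfolding fps_of_poly_mult by (simp only: distrib_left mult_ac)
  also have "\<dots> = fps_of_poly (q2*p1 + q1*p2)"
    unfolding 1 2 fps_of_poly_mult fps_of_poly_add ..
  finally have "fps_of_poly (q1*q2) * (F + G) = fps_of_poly (q2*p1 + q1*p2)" .
  moreover have "poly.coeff (q1*q2) 0 \<noteq> 0" using 1 2 by (simp add: coeff_mult_0)
  ultimately show ?thesis unfolding rational_fps_def by blast
qed

lemma rational_fps_mult: assumes "rational_fps F" "rational_fps G" shows "rational_fps (F * G)"
proof -
  obtain p1 q1 where 1: "poly.coeff q1 0 \<noteq> 0" "fps_of_poly q1 * F = fps_of_poly p1"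
    using assms(1) unfolding rational_fps_def by blast
  obtain p2 q2 where 2: "poly.coeff q2 0 \<noteq> 0" "fps_of_poly q2 * G = fps_of_poly p2"
    using assms(2) unfolding rational_fps_def by blast
  have "fps_of_poly (q1*q2) * (F * G) = (fps_of_poly q1 * F) * (fps_of_poly q2 * G)"
    unfolding fps_of_poly_mult by (simp only: mult_ac)
  also have "\<dots> = fps_of_poly (p1*p2)" unfolding 1 2 fps_of_poly_mult ..
  finally have "fps_of_poly (q1*q2) * (F * G) = fps_of_poly (p1*p2)" .
  moreover have "poly.coeff (q1*q2) 0 \<noteq> 0" using 1 2 by (simp add: coeff_mult_0)
  ultimately show ?thesis unfolding rational_fps_def by blast
qed

lemma rational_fps_sum: "finite S \<Longrightarrow> (\<And>s. s \<in> S \<Longrightarrow> rational_fps (f s)) \<Longrightarrow> rational_fps (\<Sum>s\<in>S. f s)"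
  by (induction S rule: finite_induct) (auto intro: rational_fps_add rational_fps_0)

lemma rational_fps_fixpoint:
  assumes "rational_fps A" "rational_fps B" "B $ 0 = 0" "F = A + B * F"
  shows "rational_fps F"
proof -
  obtain p1 q1 where 1: "poly.coeff q1 0 \<noteq> 0" "fps_of_poly q1 * A = fps_of_poly p1"
    using assms(1) unfolding rational_fps_def by blast
  obtain p2 q2 where 2: "poly.coeff q2 0 \<noteq> 0" "fps_of_poly q2 * B = fps_of_poly p2"
    using assms(2) unfolding rational_fps_def by blast
  have c: "poly.coeff p2 0 = 0"
  proof -
    have "fps_of_poly p2 $ 0 = 0" using 2(2)[symmetric] assms(3) by simp
    thus ?thesis by simp
  qed
  have AF: "A = F - B * F" using assms(4) by (metis add_diff_cancel)
  have "fps_of_poly (q1 * (q2 - p2)) * F = fps_of_poly q2 * (fps_of_poly q1 * (F - B * F))"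
    unfolding fps_of_poly_mult fps_of_poly_diff 2(2)[symmetric]
    by (simp only: right_diff_distrib left_diff_distrib mult_ac)
  also have "\<dots> = fps_of_poly (q2 * p1)" unfolding AF[symmetric] 1 fps_of_poly_mult ..
  finally have "fps_of_poly (q1 * (q2 - p2)) * F = fps_of_poly (q2 * p1)" .
  moreover have "poly.coeff (q1 * (q2 - p2)) 0 \<noteq> 0" using 1 2 c by (simp add: coeff_mult_0)
  ultimately show ?thesis unfolding rational_fps_def by blast
qed
lemma rational_fps_inverse_one_minus:
  assumes "rational_fps B" "B $ 0 = 0"
  shows "rational_fps (inverse (1 - B))"
proof (rule rational_fps_fixpoint[OF rational_fps_1 assms])
  have "inverse (1 - B) * (1 - B) = 1" using assms(2) by (intro inverse_mult_eq_1) simp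
  then show "inverse (1 - B) = 1 + B * inverse (1 - B)" by (simp add: algebra_simps)
qed

lemma sum_insert_eliminate:
  fixes F :: "'a \<Rightarrow> 'b::comm_ring"
  assumes "finite S" "x \<notin> S" "F x = a + (\<Sum>t\<in>S. b t * F t)"
  shows "A + (\<Sum>t\<in>insert x S. B t * F t) = (A + B x * a) + (\<Sum>t\<in>S. (B t + B x * b t) * F t)"
  using assms by (simp add: algebra_simps sum.distrib sum_distrib_left)

text \<open>Gaussian elimination: the first unknown is solved for, using that 1 - B x x is invertible,
  and substituted into the remaining equations.\<close>

lemma rational_fps_linear_system:
  assumes "finite S"
    and "\<forall>s\<in>S. rational_fps (A s)" "\<forall>s\<in>S. \<forall>t\<in>S. rational_fps (B s t) \<and> B s t $ 0 = 0"
    and "\<forall>s\<in>S. F s = A s + (\<Sum>t\<in>S. B s t * F t)"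
  shows "\<forall>s\<in>S. rational_fps (F s)"
  using assms
proof (induction S arbitrary: A B rule: finite_induct)
  case empty
  then show ?case by simp
next
  case (insert x S)
  define D where "D = inverse (1 - B x x)"
  have Bxx: "rational_fps (B x x)" "B x x $ 0 = 0" using insert.prems(2) by auto
  have D_inverse: "D * (1 - B x x) = 1" unfolding D_def using Bxx by (intro inverse_mult_eq_1) simp
  have "rational_fps D" unfolding D_def using Bxx by (rule rational_fps_inverse_one_minus)
  have "F x = A x + (\<Sum>t\<in>insert x S. B x t * F t)" using insert.prems(3) by blast
  then have "F x = A x + B x x * F x + (\<Sum>t\<in>S. B x t * F t)" using insert.hyps by (simp add: add.assoc)
  then have "(1 - B x x) * F x = A x + (\<Sum>t\<in>S. B x t * F t)" by (simp add: algebra_simps)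
  then have "F x = D * (A x + (\<Sum>t\<in>S. B x t * F t))"
    using D_inverse by (metis mult.assoc mult_1)
  then have Fx: "F x = D * A x + (\<Sum>t\<in>S. (D * B x t) * F t)"
    by (simp add: distrib_left sum_distrib_left mult.assoc)
  have "\<forall>s\<in>S. rational_fps (F s)"
  proof (rule insert.IH)
    show "\<forall>s\<in>S. rational_fps (A s + B s x * (D * A x))"
      using insert.prems(1,2) \<open>rational_fps D\<close> by (auto intro!: rational_fps_add rational_fps_mult)
    show "\<forall>s\<in>S. \<forall>t\<in>S. rational_fps (B s t + B s x * (D * B x t)) \<and> (B s t + B s x * (D * B x t)) $ 0 = 0"
      using insert.prems(2) \<open>rational_fps D\<close> by (auto intro!: rational_fps_add rational_fps_mult)
    show "\<forall>s\<in>S. F s = A s + B s x * (D * A x) + (\<Sum>t\<in>S. (B s t + B s x * (D * B x t)) * F t)"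
    proof
      fix s assume "s \<in> S"
      then have "F s = A s + (\<Sum>t\<in>insert x S. B s t * F t)" using insert.prems(3) by blast
      then show "F s = A s + B s x * (D * A x) + (\<Sum>t\<in>S. (B s t + B s x * (D * B x t)) * F t)"
        unfolding sum_insert_eliminate[OF insert.hyps Fx] .
    qed
  qed
  moreover have "rational_fps (F x)" unfolding Fx using calculation insert.prems(1,2) \<open>rational_fps D\<close> insert.hyps
    by (auto intro!: rational_fps_add rational_fps_mult rational_fps_sum)
  ultimately show ?case by simp
qed

text \<open>Walks with c letters w 0, ..., w (c - 1) in the graph (L, R) that end in a letter
  satisfying P; the padding by d beyond c makes the set of walks of each length finite.\<close>

definition walks :: "'a set \<Rightarrow> ('a \<Rightarrow> 'a \<Rightarrow> bool) \<Rightarrow> ('a \<Rightarrow> bool) \<Rightarrow> 'a \<Rightarrow> nat \<Rightarrow> (nat \<Rightarrow> 'a) set" where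
  "walks L R P d c = {w. (\<forall>j<c. w j \<in> L) \<and> (\<forall>j\<ge>c. w j = d) \<and>
      (\<forall>j. Suc j < c \<longrightarrow> R (w j) (w (Suc j))) \<and> (\<forall>m. c = Suc m \<longrightarrow> P (w m))}"

lemma finite_walks: assumes "finite L" shows "finite (walks L R P d c)"
proof (rule finite_subset)
  show "walks L R P d c \<subseteq> {f. \<forall>x. (x \<in> {..<c} \<longrightarrow> f x \<in> L) \<and> (x \<notin> {..<c} \<longrightarrow> f x = d)}"
    unfolding walks_def by auto
  show "finite \<dots>" by (rule finite_set_of_finite_funs) (use assms in auto)
qed

lemma finite_walks_filter: "finite L \<Longrightarrow> finite {w \<in> walks L R P d c. Q w}"
  using finite_walks[of L R P d c] by simp

lemma walks_0: "walks L R P d 0 = {\<lambda>_. d}"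
  unfolding walks_def by auto

text \<open>Note the shift: the index n counts walks with n + 1 letters.\<close>

definition walks_from_count :: "'a set \<Rightarrow> ('a \<Rightarrow> 'a \<Rightarrow> bool) \<Rightarrow> ('a \<Rightarrow> bool) \<Rightarrow> 'a \<Rightarrow> 'a \<Rightarrow> nat \<Rightarrow> nat"
  where "walks_from_count L R P d a n = card {w \<in> walks L R P d (Suc n). w 0 = a}"

lemma walks_from_count_0: assumes "a \<in> L"
  shows "walks_from_count L R P d a 0 = (if P a then 1 else 0)"
proof -
  have "{w \<in> walks L R P d (Suc 0). w 0 = a} = (if P a then {\<lambda>j. if j = 0 then a else d} else {})"
    using assms unfolding walks_def by (auto simp: fun_eq_iff)
  thus ?thesis unfolding walks_from_count_def by simp
qed

lemma inj_case_nat: "inj (case_nat a)"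
proof (rule injI)
  fix f g :: "nat \<Rightarrow> 'a" assume "case_nat a f = case_nat a g"
  hence "\<And>j. case_nat a f (Suc j) = case_nat a g (Suc j)" by simp
  thus "f = g" by (simp add: fun_eq_iff)
qed

lemma walks_from_Suc_eq: assumes "a \<in> L"
  shows "{w \<in> walks L R P d (Suc (Suc n)). w 0 = a} =
    case_nat a ` (\<Union>b\<in>{b\<in>L. R a b}. {w \<in> walks L R P d (Suc n). w 0 = b})"
proof (rule set_eqI, rule iffI)
  fix w assume w: "w \<in> {w \<in> walks L R P d (Suc (Suc n)). w 0 = a}"
  have eq: "w = case_nat a (\<lambda>j. w (Suc j))"
    using w by (auto simp: fun_eq_iff split: nat.split)
  have "(\<lambda>j. w (Suc j)) \<in> {v \<in> walks L R P d (Suc n). v 0 = w (Suc 0)}"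
    using w unfolding walks_def by auto
  moreover have "w (Suc 0) \<in> {b\<in>L. R a b}" using w unfolding walks_def by auto
  ultimately show "w \<in> case_nat a ` (\<Union>b\<in>{b\<in>L. R a b}. {w \<in> walks L R P d (Suc n). w 0 = b})"
    by (subst eq) blast
next
  fix w assume "w \<in> case_nat a ` (\<Union>b\<in>{b\<in>L. R a b}. {w \<in> walks L R P d (Suc n). w 0 = b})"
  then obtain b w' where b: "b \<in> L" "R a b" and w': "w' \<in> walks L R P d (Suc n)" "w' 0 = b"
    and w: "w = case_nat a w'" by blast
  have 1: "\<forall>j<Suc (Suc n). w j \<in> L"
  proof (intro allI impI)
    fix j assume "j < Suc (Suc n)" thus "w j \<in> L" using w' assms unfolding w walks_def
      by (cases j) auto
  qed
  have 2: "\<forall>j\<ge>Suc (Suc n). w j = d"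
  proof (intro allI impI)
    fix j assume "j \<ge> Suc (Suc n)" thus "w j = d" using w' unfolding w walks_def
      by (cases j) auto
  qed
  have 3: "\<forall>j. Suc j < Suc (Suc n) \<longrightarrow> R (w j) (w (Suc j))"
  proof (intro allI impI)
    fix j assume "Suc j < Suc (Suc n)" thus "R (w j) (w (Suc j))" using w' b unfolding w walks_def
      by (cases j) auto
  qed
  have 4: "\<forall>m. Suc (Suc n) = Suc m \<longrightarrow> P (w m)" using w' unfolding w walks_def by auto
  show "w \<in> {w \<in> walks L R P d (Suc (Suc n)). w 0 = a}"
    using 1 2 3 4 unfolding walks_def w by simp
qed

lemma walks_from_count_Suc: assumes "a \<in> L" "finite L"
  shows "walks_from_count L R P d a (Suc n) = (\<Sum>b\<in>L. if R a b then walks_from_count L R P d b n else 0)"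
proof -
  have "walks_from_count L R P d a (Suc n) = card (\<Union>b\<in>{b\<in>L. R a b}. {w \<in> walks L R P d (Suc n). w 0 = b})"
    unfolding walks_from_count_def walks_from_Suc_eq[OF assms(1)]
    by (rule card_image) (rule inj_on_subset[OF inj_case_nat subset_UNIV])
  also have "\<dots> = (\<Sum>b\<in>{b\<in>L. R a b}. card {w \<in> walks L R P d (Suc n). w 0 = b})"
    by (rule card_UN_disjoint) (use assms(2) finite_walks_filter in auto)
  also have "\<dots> = (\<Sum>b\<in>L. if R a b then walks_from_count L R P d b n else 0)"
    unfolding walks_from_count_def by (simp add: sum.inter_filter assms(2))
  finally show ?thesis .
qed

lemma card_walks_Suc: assumes "finite L"
  shows "card (walks L R P d (Suc n)) = (\<Sum>a\<in>L. walks_from_count L R P d a n)"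
proof -
  have "walks L R P d (Suc n) = (\<Union>a\<in>L. {w \<in> walks L R P d (Suc n). w 0 = a})"
    unfolding walks_def by auto
  moreover have "card (\<Union>a\<in>L. {w \<in> walks L R P d (Suc n). w 0 = a}) = (\<Sum>a\<in>L. card {w \<in> walks L R P d (Suc n). w 0 = a})"
    by (rule card_UN_disjoint) (use assms finite_walks_filter in auto)
  ultimately have "card (walks L R P d (Suc n)) = (\<Sum>a\<in>L. card {w \<in> walks L R P d (Suc n). w 0 = a})"
    by simp
  thus ?thesis unfolding walks_from_count_def .
qed

lemma rational_fps_card_walks: assumes "finite L"
  shows "rational_fps (Abs_fps (\<lambda>c. of_nat (card (walks L R P d c))))"
proof -
  define G where "G a = Abs_fps (\<lambda>n. of_nat (walks_from_count L R P d a n) :: rat)" for a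
  define A where "A a = fps_const (if P a then 1 else 0 :: rat)" for a
  define B where "B a b = (if R a b then fps_X else 0 :: rat fps)" for a b
  have B0: "B a b $ 0 = 0" for a b unfolding B_def by simp
  have BG: "(B a b * G b) $ Suc m = (if R a b then of_nat (walks_from_count L R P d b m) else 0)" for a b m
    unfolding B_def G_def by simp
  have sys: "\<forall>a\<in>L. G a = A a + (\<Sum>b\<in>L. B a b * G b)"
  proof
    fix a assume a: "a \<in> L"
    show "G a = A a + (\<Sum>b\<in>L. B a b * G b)"
    proof (rule fps_ext)
      fix n show "G a $ n = (A a + (\<Sum>b\<in>L. B a b * G b)) $ n"
      proof (cases n)
        case 0
        then show ?thesis using a unfolding G_def A_def by (simp add: walks_from_count_0 fps_sum_nth B0)
      next
        case (Suc m)
        have "G a $ n = (\<Sum>b\<in>L. if R a b then of_nat (walks_from_count L R P d b m) else 0)"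
          using a assms Suc unfolding G_def by (simp add: walks_from_count_Suc of_nat_sum if_distrib cong: if_cong)
        then show ?thesis using Suc unfolding A_def by (simp add: fps_sum_nth BG)
      qed
    qed
  qed
  have rG: "\<forall>a\<in>L. rational_fps (G a)"
    by (rule rational_fps_linear_system[OF assms _ _ sys]) (auto simp: A_def B_def intro: rational_fps_const rational_fps_X rational_fps_0 rational_fps_1)
  have "Abs_fps (\<lambda>c. of_nat (card (walks L R P d c))) = 1 + fps_X * (\<Sum>a\<in>L. G a)"
  proof (rule fps_ext)
    fix n show "Abs_fps (\<lambda>c. of_nat (card (walks L R P d c))) $ n = (1 + fps_X * (\<Sum>a\<in>L. G a)) $ n"
      by (cases n) (simp_all add: walks_0 card_walks_Suc assms G_def fps_sum_nth of_nat_sum)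
  qed
  thus ?thesis using rG assms by (auto intro!: rational_fps_add rational_fps_mult rational_fps_sum rational_fps_1 rational_fps_X)
qed

definition hdomino :: "nat \<Rightarrow> nat \<Rightarrow> (nat \<times> nat) set" where "hdomino i j = {(i,j),(i,Suc j)}"
definition vdomino :: "nat \<Rightarrow> nat \<Rightarrow> (nat \<times> nat) set" where "vdomino i j = {(i,j),(Suc i,j)}"

lemma is_tile_cases:
  assumes "is_tile t"
  obtains i j where "t = {(i,j)}" | i j where "t = hdomino i j" | i j where "t = vdomino i j"
  using assms unfolding is_tile_def hdomino_def vdomino_def by blast

lemma is_tile_hdomino: "is_tile (hdomino i j)" unfolding is_tile_def hdomino_def by blast
lemma is_tile_vdomino: "is_tile (vdomino i j)" unfolding is_tile_def vdomino_def by blast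
lemma is_tile_singleton: "is_tile {x}" unfolding is_tile_def by (cases x) blast

lemma hdomino_eq_iff: "hdomino i j = hdomino i' j' \<longleftrightarrow> i = i' \<and> j = j'"
  unfolding hdomino_def by (auto simp: doubleton_eq_iff)
lemma vdomino_eq_iff: "vdomino i j = vdomino i' j' \<longleftrightarrow> i = i' \<and> j = j'"
  unfolding vdomino_def by (auto simp: doubleton_eq_iff)
lemma hdomino_ne_vdomino: "hdomino i j \<noteq> vdomino i' j'"
  unfolding hdomino_def vdomino_def by (auto simp: doubleton_eq_iff)
lemma hdomino_ne_singleton: "hdomino i j \<noteq> {x}"
  unfolding hdomino_def by auto
lemma vdomino_ne_singleton: "vdomino i j \<noteq> {x}"
  unfolding vdomino_def by auto

lemma tile_eq_hdomino: "is_tile t \<Longrightarrow> (i,j) \<in> t \<Longrightarrow> (i,Suc j) \<in> t \<Longrightarrow> t = hdomino i j"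
  by (erule is_tile_cases) (auto simp: hdomino_def vdomino_def)
lemma tile_eq_vdomino: "is_tile t \<Longrightarrow> (i,j) \<in> t \<Longrightarrow> (Suc i,j) \<in> t \<Longrightarrow> t = vdomino i j"
  by (erule is_tile_cases) (auto simp: hdomino_def vdomino_def)
lemma tile_not_diagonal: "is_tile t \<Longrightarrow> (i,j) \<in> t \<Longrightarrow> (Suc i,Suc j) \<in> t \<Longrightarrow> False"
  by (erule is_tile_cases) (auto simp: hdomino_def vdomino_def)
lemma tile_not_antidiagonal: "is_tile t \<Longrightarrow> (i,Suc j) \<in> t \<Longrightarrow> (Suc i,j) \<in> t \<Longrightarrow> False"
  by (erule is_tile_cases) (auto simp: hdomino_def vdomino_def)

lemma tiling_unique: "tiling r c S \<Longrightarrow> t \<in> S \<Longrightarrow> t' \<in> S \<Longrightarrow> x \<in> t \<Longrightarrow> x \<in> t' \<Longrightarrow> t = t'"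
  unfolding tiling_def by blast
lemma tiling_mem_grid: "tiling r c S \<Longrightarrow> t \<in> S \<Longrightarrow> x \<in> t \<Longrightarrow> x \<in> grid r c"
  unfolding tiling_def by blast
lemma tiling_covers: "tiling r c S \<Longrightarrow> x \<in> grid r c \<Longrightarrow> \<exists>t\<in>S. x \<in> t"
  unfolding tiling_def by blast
lemma tiling_is_tile: "tiling r c S \<Longrightarrow> t \<in> S \<Longrightarrow> is_tile t"
  unfolding tiling_def by blast

lemma tatami_tiling: "tatami r c S \<Longrightarrow> tiling r c S"
  unfolding tatami_def by (rule conjunct1)

lemma mem_grid_iff[simp]: "(i,j) \<in> grid r c \<longleftrightarrow> i < r \<and> j < c"
  unfolding grid_def by auto

text \<open>A column state (H, V) lists the rows i with a dimer on (i, j), (i, j + 1) and the rows i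
  with a dimer on (i, j), (i + 1, j).  It must fit in r rows and its dimers must not overlap
  within the column; overlaps with the previous column's horizontal dimers are excluded by
  columns_compatible, whose last clause is the tatami condition at the point between rows i, i + 1
  and columns j, j + 1.  In the last column no horizontal dimer may start.\<close>

definition column_state :: "nat \<Rightarrow> nat set \<times> nat set \<Rightarrow> bool" where
  "column_state r a \<longleftrightarrow> fst a \<subseteq> {..<r} \<and> (\<forall>i\<in>snd a. Suc i < r) \<and> (\<forall>i. i \<in> snd a \<longrightarrow> Suc i \<notin> snd a)
     \<and> (\<forall>i. i \<in> fst a \<longrightarrow> i \<notin> snd a) \<and> (\<forall>i. Suc i \<in> fst a \<longrightarrow> i \<notin> snd a)"

definition columns_compatible :: "nat \<Rightarrow> nat set \<times> nat set \<Rightarrow> nat set \<times> nat set \<Rightarrow> bool" where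
  "columns_compatible r a b \<longleftrightarrow> (\<forall>i. i \<in> fst a \<longrightarrow> i \<notin> fst b) \<and> (\<forall>i. i \<in> fst a \<longrightarrow> i \<notin> snd b)
     \<and> (\<forall>i. Suc i \<in> fst a \<longrightarrow> i \<notin> snd b)
     \<and> (\<forall>i. Suc i < r \<longrightarrow> i \<in> fst a \<or> Suc i \<in> fst a \<or> i \<in> snd a \<or> i \<in> snd b)"

definition column_final :: "nat set \<times> nat set \<Rightarrow> bool" where "column_final a \<longleftrightarrow> fst a = {}"

abbreviation tatami_words :: "nat \<Rightarrow> nat \<Rightarrow> (nat \<Rightarrow> nat set \<times> nat set) set" where
  "tatami_words r c \<equiv> walks {a. column_state r a} (columns_compatible r) column_final ({},{}) c"

lemma finite_column_state: "finite {a. column_state r a}"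
proof (rule finite_subset)
  show "{a. column_state r a} \<subseteq> Pow {..<r} \<times> Pow {..<r}" unfolding column_state_def by (auto; meson Suc_lessD)
qed simp

definition column_encoding :: "(nat \<times> nat) set set \<Rightarrow> nat \<Rightarrow> nat set \<times> nat set" where
  "column_encoding S = (\<lambda>j. ({i. hdomino i j \<in> S}, {i. vdomino i j \<in> S}))"

definition dominoes :: "(nat \<Rightarrow> nat set \<times> nat set) \<Rightarrow> (nat \<times> nat) set set" where
  "dominoes w = {hdomino i j | i j. i \<in> fst (w j)} \<union> {vdomino i j | i j. i \<in> snd (w j)}"

definition tiling_of_columns :: "nat \<Rightarrow> nat \<Rightarrow> (nat \<Rightarrow> nat set \<times> nat set) \<Rightarrow> (nat \<times> nat) set set" where
  "tiling_of_columns r c w = dominoes w \<union> {{x} | x. x \<in> grid r c \<and> x \<notin> \<Union>(dominoes w)}"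

lemma column_state_column_encoding:
  assumes til: "tiling r c S" and "j < c"
  shows "column_state r (column_encoding S j)"
  unfolding column_state_def column_encoding_def
proof (intro conjI allI impI ballI subsetI; simp)
  note U = tiling_unique[OF til] and G = tiling_mem_grid[OF til]
  fix i
  show "hdomino i j \<in> S \<Longrightarrow> i < r" using G[of "hdomino i j" "(i,j)"] by (simp add: hdomino_def)
  show "vdomino i j \<in> S \<Longrightarrow> Suc i < r" using G[of "vdomino i j" "(Suc i,j)"] by (simp add: vdomino_def)
  show "vdomino i j \<in> S \<Longrightarrow> vdomino (Suc i) j \<notin> S"
    using U[of "vdomino i j" "vdomino (Suc i) j" "(Suc i, j)"] by (auto simp: vdomino_def doubleton_eq_iff)
  show "hdomino i j \<in> S \<Longrightarrow> vdomino i j \<notin> S"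
    using U[of "hdomino i j" "vdomino i j" "(i, j)"] by (auto simp: vdomino_def hdomino_def doubleton_eq_iff)
  show "hdomino (Suc i) j \<in> S \<Longrightarrow> vdomino i j \<notin> S"
    using U[of "hdomino (Suc i) j" "vdomino i j" "(Suc i, j)"] by (auto simp: vdomino_def hdomino_def doubleton_eq_iff)
qed

text \<open>If none of the four dominoes listed in the last clause of columns_compatible
  occurs, the cells (i,j), (i,j+1), (i+1,j), (i+1,j+1) lie in four distinct tiles.\<close>

lemma columns_compatible_column_encoding:
  assumes ta: "tatami r c S" and sj: "Suc j < c"
  shows "columns_compatible r (column_encoding S j) (column_encoding S (Suc j))"
  unfolding columns_compatible_def column_encoding_def
proof (intro conjI allI impI; simp)
  have til: "tiling r c S" using ta by (rule tatami_tiling)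
  note U = tiling_unique[OF til]
  fix i
  show "hdomino i j \<in> S \<Longrightarrow> hdomino i (Suc j) \<notin> S"
    using U[of "hdomino i j" "hdomino i (Suc j)" "(i, Suc j)"] by (auto simp: hdomino_def doubleton_eq_iff)
  show "hdomino i j \<in> S \<Longrightarrow> vdomino i (Suc j) \<notin> S"
    using U[of "hdomino i j" "vdomino i (Suc j)" "(i, Suc j)"] by (auto simp: hdomino_def vdomino_def doubleton_eq_iff)
  show "hdomino (Suc i) j \<in> S \<Longrightarrow> vdomino i (Suc j) \<notin> S"
    using U[of "hdomino (Suc i) j" "vdomino i (Suc j)" "(Suc i, Suc j)"] by (auto simp: hdomino_def vdomino_def doubleton_eq_iff)
  assume i: "Suc i < r"
  show "hdomino i j \<in> S \<or> hdomino (Suc i) j \<in> S \<or> vdomino i j \<in> S \<or> vdomino i (Suc j) \<in> S"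
  proof (rule ccontr)
    assume n: "\<not> ?thesis"
    obtain t1 where t1: "t1 \<in> S" "(i,j) \<in> t1" using tiling_covers[OF til, of "(i,j)"] i sj by auto
    obtain t2 where t2: "t2 \<in> S" "(i,Suc j) \<in> t2" using tiling_covers[OF til, of "(i,Suc j)"] i sj by auto
    obtain t3 where t3: "t3 \<in> S" "(Suc i,j) \<in> t3" using tiling_covers[OF til, of "(Suc i,j)"] i sj by auto
    obtain t4 where t4: "t4 \<in> S" "(Suc i,Suc j) \<in> t4" using tiling_covers[OF til, of "(Suc i,Suc j)"] i sj by auto
    note T = tiling_is_tile[OF til]
    have "t1 \<noteq> t2" using tile_eq_hdomino[OF T[OF t1(1)] t1(2)] t2 t1 n by auto
    moreover have "t1 \<noteq> t3" using tile_eq_vdomino[OF T[OF t1(1)] t1(2)] t3 t1 n by auto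
    moreover have "t1 \<noteq> t4" using tile_not_diagonal[OF T[OF t1(1)] t1(2)] t4 by auto
    moreover have "t2 \<noteq> t3" using tile_not_antidiagonal[OF T[OF t2(1)] t2(2)] t3 by auto
    moreover have "t2 \<noteq> t4" using tile_eq_vdomino[OF T[OF t2(1)] t2(2)] t4 t2 n by auto
    moreover have "t3 \<noteq> t4" using tile_eq_hdomino[OF T[OF t3(1)] t3(2)] t4 t3 n by auto
    ultimately show False using ta t1 t2 t3 t4 unfolding tatami_def
      by (metis (no_types, lifting) diff_Suc_1 zero_less_Suc)
  qed
qed

lemma column_encoding_in_tatami_words:
  assumes ta: "tatami r c S"
  shows "column_encoding S \<in> tatami_words r c"
proof -
  have til: "tiling r c S" using ta by (rule tatami_tiling)
  note G = tiling_mem_grid[OF til]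
  have "column_encoding S j = ({},{})" if "c \<le> j" for j
    unfolding column_encoding_def using that G[of _ "(_, j)"] by (fastforce simp: hdomino_def vdomino_def)
  moreover have "column_final (column_encoding S m)" if "c = Suc m" for m
    unfolding column_final_def column_encoding_def using that G[of _ "(_, Suc m)"] by (auto simp: hdomino_def)
  ultimately show ?thesis unfolding walks_def
    using column_state_column_encoding[OF til] columns_compatible_column_encoding[OF ta] by auto
qed

context
  fixes r c w assumes w: "w \<in> tatami_words r c"
begin

lemma word_column_state: "j < c \<Longrightarrow> column_state r (w j)" using w unfolding walks_def by auto
lemma word_compatible: "Suc j < c \<Longrightarrow> columns_compatible r (w j) (w (Suc j))" using w unfolding walks_def by auto
lemma word_beyond: "c \<le> j \<Longrightarrow> w j = ({},{})" using w unfolding walks_def by auto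
lemma word_last_final: "c = Suc m \<Longrightarrow> fst (w m) = {}" using w unfolding walks_def column_final_def by auto

lemma hdomino_start_bounds: assumes "i \<in> fst (w j)" shows "i < r" "Suc j < c"
proof -
  have jc: "j < c" using word_beyond[of j] assms by (cases "c \<le> j") auto
  show "i < r" using word_column_state[OF jc] assms unfolding column_state_def by auto
  show "Suc j < c"
  proof (rule ccontr)
    assume "\<not> Suc j < c" hence "c = Suc j" using jc by simp
    thus False using word_last_final[of j] assms by simp
  qed
qed

lemma vdomino_start_bounds: assumes "i \<in> snd (w j)" shows "Suc i < r" "j < c"
proof -
  show jc: "j < c" using word_beyond[of j] assms by (cases "c \<le> j") auto
  show "Suc i < r" using word_column_state[OF jc] assms unfolding column_state_def by auto
qed

lemma dominoes_in_grid: "t \<in> dominoes w \<Longrightarrow> x \<in> t \<Longrightarrow> x \<in> grid r c"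
  unfolding dominoes_def hdomino_def vdomino_def
  using hdomino_start_bounds vdomino_start_bounds by (fastforce dest: Suc_lessD)

lemma hdominoes_overlap_eq: assumes "i \<in> fst (w j)" "i' \<in> fst (w j')" "x \<in> hdomino i j" "x \<in> hdomino i' j'"
  shows "hdomino i j = hdomino i' j'"
proof -
  have "i = i'" "j = j' \<or> j' = Suc j \<or> j = Suc j'" using assms(3,4) unfolding hdomino_def by auto
  moreover have "j' \<noteq> Suc j" using word_compatible[OF hdomino_start_bounds(2)[OF assms(1)]] assms(1,2) unfolding columns_compatible_def
    by (auto simp: \<open>i = i'\<close>)
  moreover have "j \<noteq> Suc j'" using word_compatible[OF hdomino_start_bounds(2)[OF assms(2)]] assms(1,2) unfolding columns_compatible_def
    by (auto simp: \<open>i = i'\<close>)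
  ultimately show ?thesis by auto
qed

lemma vdominoes_overlap_eq: assumes "i \<in> snd (w j)" "i' \<in> snd (w j')" "x \<in> vdomino i j" "x \<in> vdomino i' j'"
  shows "vdomino i j = vdomino i' j'"
proof -
  have "j = j'" "i = i' \<or> i' = Suc i \<or> i = Suc i'" using assms(3,4) unfolding vdomino_def by auto
  moreover have "i' \<noteq> Suc i" using word_column_state[OF vdomino_start_bounds(2)[OF assms(1)]] assms(1,2) unfolding column_state_def
    by (auto simp: \<open>j = j'\<close>)
  moreover have "i \<noteq> Suc i'" using word_column_state[OF vdomino_start_bounds(2)[OF assms(2)]] assms(1,2) unfolding column_state_def
    by (auto simp: \<open>j = j'\<close>)
  ultimately show ?thesis by auto
qed

lemma hdomino_vdomino_disjoint: assumes "i \<in> fst (w j)" "i' \<in> snd (w j')" "x \<in> hdomino i j" "x \<in> vdomino i' j'"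
  shows False
proof -
  have L: "column_state r (w j)" using hdomino_start_bounds(2)[OF assms(1)] word_column_state by simp
  have R: "columns_compatible r (w j) (w (Suc j))" using hdomino_start_bounds(2)[OF assms(1)] word_compatible by simp
  have "(i = i' \<and> j = j') \<or> (i = Suc i' \<and> j = j') \<or> (i = i' \<and> j' = Suc j) \<or> (i = Suc i' \<and> j' = Suc j)"
    using assms(3,4) unfolding hdomino_def vdomino_def by auto
  thus False
  proof (elim disjE conjE)
    assume "i = i'" "j = j'" thus False using L assms(1,2) unfolding column_state_def by blast
  next
    assume "i = Suc i'" "j = j'" thus False using L assms(1,2) unfolding column_state_def by blast
  next
    assume "i = i'" "j' = Suc j" thus False using R assms(1,2) unfolding columns_compatible_def by blast
  next
    assume "i = Suc i'" "j' = Suc j" thus False using R assms(1,2) unfolding columns_compatible_def by blast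
  qed
qed

lemma dominoes_cases:
  assumes "t \<in> dominoes w"
  obtains (h) i j where "t = hdomino i j" "i \<in> fst (w j)" | (v) i j where "t = vdomino i j" "i \<in> snd (w j)"
  using assms unfolding dominoes_def by blast

lemma dominoes_unique: assumes "t \<in> dominoes w" "t' \<in> dominoes w" "x \<in> t" "x \<in> t'" shows "t = t'"
  using assms(1)
proof (cases rule: dominoes_cases)
  case (h i j)
  from assms(2) show ?thesis
  proof (cases rule: dominoes_cases)
    case (h i' j') thus ?thesis using hdominoes_overlap_eq[of i j i' j' x] \<open>t = hdomino i j\<close> \<open>i \<in> fst (w j)\<close> assms(3,4) by simp
  next
    case (v i' j') thus ?thesis using hdomino_vdomino_disjoint[of i j i' j' x] \<open>t = hdomino i j\<close> \<open>i \<in> fst (w j)\<close> assms(3,4) by simp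
  qed
next
  case (v i j)
  from assms(2) show ?thesis
  proof (cases rule: dominoes_cases)
    case (h i' j') thus ?thesis using hdomino_vdomino_disjoint[of i' j' i j x] \<open>t = vdomino i j\<close> \<open>i \<in> snd (w j)\<close> assms(3,4) by simp
  next
    case (v i' j') thus ?thesis using vdominoes_overlap_eq[of i j i' j' x] \<open>t = vdomino i j\<close> \<open>i \<in> snd (w j)\<close> assms(3,4) by simp
  qed
qed

lemma tiling_of_columns_unique: assumes "t \<in> tiling_of_columns r c w" "t' \<in> tiling_of_columns r c w" "x \<in> t" "x \<in> t'" shows "t = t'"
proof -
  consider "t \<in> dominoes w" | y where "t = {y}" "y \<notin> \<Union>(dominoes w)" using assms(1) unfolding tiling_of_columns_def by blast
  moreover consider "t' \<in> dominoes w" | y' where "t' = {y'}" "y' \<notin> \<Union>(dominoes w)" using assms(2) unfolding tiling_of_columns_def by blast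
  ultimately show ?thesis using dominoes_unique[of t t' x] assms(3,4) by (cases; cases) blast+
qed

lemma tiling_tiling_of_columns: "tiling r c (tiling_of_columns r c w)"
  unfolding tiling_def
proof (intro conjI ballI impI)
  fix t assume "t \<in> tiling_of_columns r c w" thus "is_tile t"
    unfolding tiling_of_columns_def dominoes_def by (auto intro: is_tile_hdomino is_tile_vdomino is_tile_singleton)
next
  show "\<Union> (tiling_of_columns r c w) = grid r c"
  proof
    show "\<Union> (tiling_of_columns r c w) \<subseteq> grid r c" using dominoes_in_grid unfolding tiling_of_columns_def by auto
    show "grid r c \<subseteq> \<Union> (tiling_of_columns r c w)"
    proof
      fix x assume x: "x \<in> grid r c"
      show "x \<in> \<Union> (tiling_of_columns r c w)"
      proof (cases "x \<in> \<Union>(dominoes w)")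
        case True thus ?thesis unfolding tiling_of_columns_def by blast
      next
        case False hence "{x} \<in> tiling_of_columns r c w" using x unfolding tiling_of_columns_def by blast
        thus ?thesis by blast
      qed
    qed
  qed
next
  fix t t' assume "t \<in> tiling_of_columns r c w" "t' \<in> tiling_of_columns r c w" "t \<noteq> t'"
  thus "t \<inter> t' = {}" using tiling_of_columns_unique by blast
qed

lemma tatami_tiling_of_columns: "tatami r c (tiling_of_columns r c w)"
  unfolding tatami_def
proof (intro conjI tiling_tiling_of_columns allI impI notI)
  fix i j :: nat assume "0 < i \<and> 0 < j"
  then obtain i0 j0 where i0: "i = Suc i0" and j0: "j = Suc j0" by (metis gr0_implies_Suc)
  assume "\<exists>t1\<in>tiling_of_columns r c w. \<exists>t2\<in>tiling_of_columns r c w. \<exists>t3\<in>tiling_of_columns r c w. \<exists>t4\<in>tiling_of_columns r c w.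
              (i - 1, j - 1) \<in> t1 \<and> (i - 1, j) \<in> t2 \<and> (i, j - 1) \<in> t3 \<and> (i, j) \<in> t4 \<and>
              t1 \<noteq> t2 \<and> t1 \<noteq> t3 \<and> t1 \<noteq> t4 \<and> t2 \<noteq> t3 \<and> t2 \<noteq> t4 \<and> t3 \<noteq> t4"
  then obtain t1 t2 t3 t4 where t: "t1 \<in> tiling_of_columns r c w" "t2 \<in> tiling_of_columns r c w" "t3 \<in> tiling_of_columns r c w" "t4 \<in> tiling_of_columns r c w"
    "(i0, j0) \<in> t1" "(i0, Suc j0) \<in> t2" "(Suc i0, j0) \<in> t3" "(Suc i0, Suc j0) \<in> t4"
    "t1 \<noteq> t2" "t1 \<noteq> t3" "t2 \<noteq> t4" "t3 \<noteq> t4" unfolding i0 j0 by auto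
  have "(Suc i0, Suc j0) \<in> grid r c" using tiling_tiling_of_columns t(4,8) by (rule tiling_mem_grid)
  hence bd: "Suc i0 < r" "Suc j0 < c" by auto
  have R: "columns_compatible r (w j0) (w (Suc j0))" using word_compatible bd by simp
  have DD: "dominoes w \<subseteq> tiling_of_columns r c w" unfolding tiling_of_columns_def by auto
  have "i0 \<in> fst (w j0) \<or> Suc i0 \<in> fst (w j0) \<or> i0 \<in> snd (w j0) \<or> i0 \<in> snd (w (Suc j0))"
    using R bd unfolding columns_compatible_def by auto
  thus False
  proof (elim disjE)
    assume "i0 \<in> fst (w j0)"
    hence "hdomino i0 j0 \<in> tiling_of_columns r c w" using DD unfolding dominoes_def by blast
    hence "t1 = hdomino i0 j0" "t2 = hdomino i0 j0" using tiling_of_columns_unique t unfolding hdomino_def by blast+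
    thus False using t by simp
  next
    assume "Suc i0 \<in> fst (w j0)"
    hence "hdomino (Suc i0) j0 \<in> tiling_of_columns r c w" using DD unfolding dominoes_def by blast
    hence "t3 = hdomino (Suc i0) j0" "t4 = hdomino (Suc i0) j0" using tiling_of_columns_unique t unfolding hdomino_def by blast+
    thus False using t by simp
  next
    assume "i0 \<in> snd (w j0)"
    hence "vdomino i0 j0 \<in> tiling_of_columns r c w" using DD unfolding dominoes_def by blast
    hence "t1 = vdomino i0 j0" "t3 = vdomino i0 j0" using tiling_of_columns_unique t unfolding vdomino_def by blast+
    thus False using t by simp
  next
    assume "i0 \<in> snd (w (Suc j0))"
    hence "vdomino i0 (Suc j0) \<in> tiling_of_columns r c w" using DD unfolding dominoes_def by blast
    hence "t2 = vdomino i0 (Suc j0)" "t4 = vdomino i0 (Suc j0)" using tiling_of_columns_unique t unfolding vdomino_def by blast+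
    thus False using t by simp
  qed
qed

lemma column_encoding_tiling_of_columns: "column_encoding (tiling_of_columns r c w) = w"
proof
  fix j
  have 1: "hdomino i j \<in> tiling_of_columns r c w \<longleftrightarrow> i \<in> fst (w j)" for i
    unfolding tiling_of_columns_def dominoes_def by (auto simp: hdomino_eq_iff hdomino_ne_vdomino hdomino_ne_singleton)
  have 2: "vdomino i j \<in> tiling_of_columns r c w \<longleftrightarrow> i \<in> snd (w j)" for i
    unfolding tiling_of_columns_def dominoes_def by (auto simp: vdomino_eq_iff hdomino_ne_vdomino[symmetric] vdomino_ne_singleton)
  show "column_encoding (tiling_of_columns r c w) j = w j" unfolding column_encoding_def 1 2 by simp
qed

end

lemma dominoes_column_encoding_subset: "dominoes (column_encoding S) \<subseteq> S"
  unfolding dominoes_def column_encoding_def by auto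

lemma tiling_of_columns_column_encoding_subset:
  assumes til: "tiling r c S"
  shows "tiling_of_columns r c (column_encoding S) \<subseteq> S"
proof
  fix t assume "t \<in> tiling_of_columns r c (column_encoding S)"
  then consider "t \<in> dominoes (column_encoding S)"
    | x where "t = {x}" "x \<in> grid r c" "x \<notin> \<Union>(dominoes (column_encoding S))"
    unfolding tiling_of_columns_def by blast
  then show "t \<in> S"
  proof cases
    case 1 then show ?thesis using dominoes_column_encoding_subset by blast
  next
    case 2
    obtain t' where t': "t' \<in> S" "x \<in> t'" using tiling_covers[OF til 2(2)] by blast
    have not_domino: "t' \<notin> dominoes (column_encoding S)" using t'(2) 2(3) by blast
    from tiling_is_tile[OF til t'(1)] have "t' = {x}"
    proof (cases rule: is_tile_cases)
      case 1 then show ?thesis using t'(2) by simp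
    next
      case 2 then show ?thesis using t'(1) not_domino unfolding dominoes_def column_encoding_def by auto
    next
      case 3 then show ?thesis using t'(1) not_domino unfolding dominoes_def column_encoding_def by auto
    qed
    then show ?thesis using t'(1) 2(1) by simp
  qed
qed

lemma subset_tiling_of_columns_column_encoding:
  assumes til: "tiling r c S"
  shows "S \<subseteq> tiling_of_columns r c (column_encoding S)"
proof
  fix t assume t: "t \<in> S"
  from tiling_is_tile[OF til t] show "t \<in> tiling_of_columns r c (column_encoding S)"
  proof (cases rule: is_tile_cases)
    case (1 i j)
    have "(i,j) \<notin> \<Union>(dominoes (column_encoding S))"
    proof
      assume "(i,j) \<in> \<Union>(dominoes (column_encoding S))"
      then obtain d where d: "d \<in> dominoes (column_encoding S)" "(i,j) \<in> d" by blast
      have "d = t" using tiling_unique[OF til _ t d(2)] d dominoes_column_encoding_subset 1 by blast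
      then show False using d(1) 1 unfolding dominoes_def
        by (auto simp: hdomino_ne_singleton[symmetric] vdomino_ne_singleton[symmetric])
    qed
    moreover have "(i,j) \<in> grid r c" using tiling_mem_grid[OF til t] 1 by simp
    ultimately show ?thesis using 1 unfolding tiling_of_columns_def by blast
  next
    case 2 then show ?thesis using t unfolding tiling_of_columns_def dominoes_def column_encoding_def by auto
  next
    case 3 then show ?thesis using t unfolding tiling_of_columns_def dominoes_def column_encoding_def by auto
  qed
qed

lemma tiling_of_columns_column_encoding:
  assumes "tiling r c S"
  shows "tiling_of_columns r c (column_encoding S) = S"
  using tiling_of_columns_column_encoding_subset[OF assms] subset_tiling_of_columns_column_encoding[OF assms]
  by (rule subset_antisym)

lemma T_eq_card_tatami_words: "T r c = card (tatami_words r c)"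
proof -
  have "bij_betw column_encoding {S. tatami r c S} (tatami_words r c)"
  proof (rule bij_betw_byWitness[where f' = "tiling_of_columns r c"])
    show "\<forall>S\<in>{S. tatami r c S}. tiling_of_columns r c (column_encoding S) = S"
      using tiling_of_columns_column_encoding tatami_tiling by blast
    show "\<forall>w\<in>tatami_words r c. column_encoding (tiling_of_columns r c w) = w"
      using column_encoding_tiling_of_columns by blast
    show "column_encoding ` {S. tatami r c S} \<subseteq> tatami_words r c"
      using column_encoding_in_tatami_words by blast
    show "tiling_of_columns r c ` tatami_words r c \<subseteq> {S. tatami r c S}"
      using tatami_tiling_of_columns by blast
  qed
  then show ?thesis unfolding T_def by (rule bij_betw_same_card)
qed

theorem theorem3:
  fixes r :: nat
  assumes "r \<ge> 1"
  shows "\<exists>p q :: rat poly. q \<noteq> 0 \<and>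
           fps_of_poly q * Abs_fps (\<lambda>c. of_nat (T r c)) = fps_of_poly p"
proof -
  have "rational_fps (Abs_fps (\<lambda>c. of_nat (T r c)))"
    unfolding T_eq_card_tatami_words by (rule rational_fps_card_walks[OF finite_column_state])
  then obtain p q :: "rat poly" where
    "poly.coeff q 0 \<noteq> 0" "fps_of_poly q * Abs_fps (\<lambda>c. of_nat (T r c)) = fps_of_poly p"
    unfolding rational_fps_def by blast
  then show ?thesis by (intro exI[of _ p] exI[of _ q]) auto
qed

end
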